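(* For each $X\subseteq\omega$, the equivalence relation $E^X_=$ on $\omega$ defined by $i\,E^X_=\,j\iff W_i^X=W_j^X$ is complete among all $\Pi^X_2$ equivalence relations on $\omega$ with respect to finitary reducibility; that is, for every equivalence relation $R$ on $\omega$ which is $\Pi^0_2$ relative to $X$, there is a (computable, not merely $X$-computable) finitary reduction from $R$ to $E^X_=$.
   Context: $W_e^X$ denotes the domain of the $e$-th oracle Turing machine with oracle $X$. For equivalence relations $E,F$ on $\omega$, a finitary reduction from $E$ to $F$ is a single total computable function which, given $n\ge1$ and an $n$-tuple $(x_0,\dots,x_{n-1})\in\omega^n$, outputs an $n$-tuple $(y_0,\dots,y_{n-1})\in\omega^n$ such that for all $i<j<n$, $x_i\,E\,x_j\iff y_i\,F\,y_j$; its existence is written $E\leq_c^{<\omega}F$. *)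

theory Defs
  imports Main "HOL-Library.Nat_Bijection"
begin

datatype recf =
    Zero
  | SucF
  | Proj nat
  | Comp recf "recf list"
  | Prec recf recf
  | Minim recf
  | Oracle

text \<open>Big-step semantics relative to the oracle set X (a partial function: the relation
  is functional, undefined = no result).\<close>

inductive eval :: "nat set \<Rightarrow> recf \<Rightarrow> nat list \<Rightarrow> nat \<Rightarrow> bool" for X :: "nat set" where
  eval_Zero: "eval X Zero xs 0"
| eval_Suc: "eval X SucF (x # xs) (Suc x)"
| eval_Proj: "i < length xs \<Longrightarrow> eval X (Proj i) xs (xs ! i)"
| eval_Comp: "list_all2 (\<lambda>g y. eval X g xs y) gs ys \<Longrightarrow> eval X f ys z
      \<Longrightarrow> eval X (Comp f gs) xs z"
| eval_Prec0: "eval X f xs y \<Longrightarrow> eval X (Prec f g) (0 # xs) y"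
| eval_PrecS: "eval X (Prec f g) (n # xs) y \<Longrightarrow> eval X g (n # y # xs) z
      \<Longrightarrow> eval X (Prec f g) (Suc n # xs) z"
| eval_Minim: "eval X f (n # xs) 0 \<Longrightarrow> (\<forall>m<n. \<exists>y. 0 < y \<and> eval X f (m # xs) y)
      \<Longrightarrow> eval X (Minim f) xs n"
| eval_Oracle: "eval X Oracle (x # xs) (if x \<in> X then 1 else 0)"

text \<open>Goedel numbering of programs (computable, injective, decidable range).\<close>

fun enc :: "recf \<Rightarrow> nat" where
  "enc Zero = prod_encode (0, 0)"
| "enc SucF = prod_encode (1, 0)"
| "enc (Proj i) = prod_encode (2, i)"
| "enc (Comp f gs) = prod_encode (3, list_encode (enc f # map enc gs))"
| "enc (Prec f g) = prod_encode (4, prod_encode (enc f, enc g))"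
| "enc (Minim f) = prod_encode (5, enc f)"
| "enc Oracle = prod_encode (6, 0)"

text \<open>W_e^X: domain of the e-th oracle machine with oracle X (non-codes: empty).\<close>

definition W :: "nat \<Rightarrow> nat set \<Rightarrow> nat set" where
  "W e X = {x. \<exists>p y. enc p = e \<and> eval X p [x] y}"

definition Pi2_rel :: "nat set \<Rightarrow> (nat \<Rightarrow> nat \<Rightarrow> bool) \<Rightarrow> bool" where
  "Pi2_rel X R \<longleftrightarrow> (\<exists>Q p. (\<forall>i j a b. eval X p [i, j, a, b] (if Q i j a b then 1 else 0))
      \<and> (\<forall>i j. R i j \<longleftrightarrow> (\<forall>a. \<exists>b. Q i j a b)))"

text \<open>Finitary reducibility: one total computable (oracle-free) function mapping each
  n-tuple (n \<ge> 1, coded as a nonempty list via list_encode) to an n-tuple.\<close>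

definition finitary_reducible :: "(nat \<Rightarrow> nat \<Rightarrow> bool) \<Rightarrow> (nat \<Rightarrow> nat \<Rightarrow> bool) \<Rightarrow> bool" where
  "finitary_reducible E F \<longleftrightarrow> (\<exists>g :: nat list \<Rightarrow> nat list. \<exists>p.
      (\<forall>xs. xs \<noteq> [] \<longrightarrow> eval {} p [list_encode xs] (list_encode (g xs))) \<and>
      (\<forall>xs. xs \<noteq> [] \<longrightarrow> length (g xs) = length xs \<and>
         (\<forall>i j. i < j \<and> j < length xs \<longrightarrow> (E (xs ! i) (xs ! j) \<longleftrightarrow> F (g xs ! i) (g xs ! j)))))"

end

theory Submission
  imports Defs "HOL-Library.More_List"
begin

text \<open>
  Write \<open>R u v \<longleftrightarrow> (\<forall>a. \<exists>b. Q u v a b)\<close> with \<open>Q\<close> decidable in \<open>X\<close>. Given a tuple \<open>xs\<close>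
  and a stage \<open>t\<close>, join positions \<open>k\<close> and \<open>l\<close> when every \<open>a \<le> t\<close> has a witness \<open>b\<close> for
  \<open>(xs!k, xs!l)\<close>. Then \<open>R (xs!i) (xs!j)\<close> holds iff at every stage the positions reaching \<open>i\<close>
  are exactly those reaching \<open>j\<close>: R-related positions are joined at every stage, and since
  only finitely many pairs of positions are unrelated, at some stage all edges join R-related
  entries, so that reachability implies \<open>R\<close> by transitivity.

  The set of pairs \<open>(m, t)\<close> such that \<open>m\<close> reaches \<open>i\<close> at stage \<open>t\<close> is \<open>\<Sigma>\<^sub>1\<close> in \<open>X\<close>, uniformly
  in \<open>(xs, i)\<close>. It is therefore \<open>W\<^sup>X\<close> of an index obtained from \<open>(xs, i)\<close> by the s-m-n
  construction, which uses no oracle; sending \<open>xs\<close> to these indices is the reduction.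
\<close>

section \<open>Programs and functions recursive in an oracle\<close>

lemma eval_deterministic: "eval X p xs y \<Longrightarrow> eval X p xs y' \<Longrightarrow> y = y'"
proof (induction arbitrary: y' rule: eval.induct)
  case (eval_Comp xs gs ys f z)
  from eval_Comp.prems obtain ys' where ys': "list_all2 (\<lambda>g y. eval X g xs y) gs ys'" "eval X f ys' y'"
    by (cases rule: eval.cases) auto
  have "ys = ys'" using eval_Comp.IH(1) ys'(1)
    by (induction gs ys arbitrary: ys' rule: list_all2_induct) (auto simp: list_all2_Cons1)
  then show ?case using eval_Comp.IH(2) ys'(2) by auto
next
  case (eval_PrecS f g n xs y z)
  from eval_PrecS.prems obtain y2 where "eval X (Prec f g) (n # xs) y2" "eval X g (n # y2 # xs) y'"
    by (cases rule: eval.cases) auto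
  then show ?case using eval_PrecS.IH by auto
next
  case (eval_Minim f n xs)
  from eval_Minim.prems have zero: "eval X f (y' # xs) 0" and below: "\<forall>m<y'. \<exists>y>0. eval X f (m # xs) y"
    by (cases rule: eval.cases; auto)+
  show ?case
  proof (rule ccontr)
    assume "n \<noteq> y'"
    then consider "n < y'" | "y' < n" by linarith
    then show False
    proof cases
      case 1 then obtain y where "y > 0" "eval X f (n # xs) y" using below by blast
      then show False using eval_Minim.IH(1) by fastforce
    next
      case 2 then show False using eval_Minim.IH(2) zero by fastforce
    qed
  qed
qed (erule eval.cases; auto)+

lemma enc_inj: "enc p = enc p' \<Longrightarrow> p = p'"
proof (induction p arbitrary: p')
  case (Comp f gs)
  note IH = Comp.IH and eq = Comp.prems
  show ?case
  proof (cases p')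
    case (Comp f' gs')
    with eq have "enc f = enc f'" "map enc gs = map enc gs'"
      by (simp_all add: list_encode_eq)
    with IH show ?thesis
      unfolding Comp by (metis list.inj_map_strong)
  qed (use eq in simp_all)
qed (case_tac p'; auto)+

lemma W_enc: "W (enc p) X = {x. \<exists>y. eval X p [x] y}"
  unfolding W_def using enc_inj by blast

definition recursive_in :: "nat set \<Rightarrow> nat \<Rightarrow> (nat list \<Rightarrow> nat) \<Rightarrow> bool" where
  "recursive_in X k f \<longleftrightarrow> (\<exists>p. \<forall>xs. length xs = k \<longrightarrow> eval X p xs (f xs))"

lemma recursive_in_cong:
  "recursive_in X k f \<Longrightarrow> (\<And>xs. length xs = k \<Longrightarrow> f xs = g xs) \<Longrightarrow> recursive_in X k g"
  unfolding recursive_in_def by metis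

primrec const_recf :: "nat \<Rightarrow> recf" where
  "const_recf 0 = Zero"
| "const_recf (Suc c) = Comp SucF [const_recf c]"

lemma eval_const_recf: "eval X (const_recf c) xs c"
  by (induction c) (auto intro!: eval.intros)

lemma recursive_in_const: "recursive_in X k (\<lambda>_. c)"
  unfolding recursive_in_def using eval_const_recf by blast

lemma recursive_in_nth: "i < k \<Longrightarrow> recursive_in X k (\<lambda>xs. xs ! i)"
  unfolding recursive_in_def by (auto intro!: exI[of _ "Proj i"] eval.intros)

lemma recursive_in_hd: "0 < k \<Longrightarrow> recursive_in X k hd"
  by (rule recursive_in_cong[OF recursive_in_nth]) (auto simp: hd_conv_nth)

lemma recursive_in_Suc: "recursive_in X 1 (\<lambda>xs. Suc (hd xs))"
  unfolding recursive_in_def by (auto simp: length_Suc_conv intro!: exI[of _ SucF] eval.intros)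

lemma recursive_in_comp:
  assumes "recursive_in X (length Gs) F" "\<forall>G\<in>set Gs. recursive_in X k G"
  shows "recursive_in X k (\<lambda>xs. F (map (\<lambda>G. G xs) Gs))"
proof -
  obtain pf where pf: "\<forall>xs. length xs = length Gs \<longrightarrow> eval X pf xs (F xs)"
    using assms(1) unfolding recursive_in_def by auto
  have "\<forall>G\<in>set Gs. \<exists>p. \<forall>xs. length xs = k \<longrightarrow> eval X p xs (G xs)"
    using assms(2) unfolding recursive_in_def by blast
  then obtain prog where prog: "\<forall>G\<in>set Gs. \<forall>xs. length xs = k \<longrightarrow> eval X (prog G) xs (G xs)"
    by metis
  have "eval X (Comp pf (map prog Gs)) xs (F (map (\<lambda>G. G xs) Gs))" if "length xs = k" for xs
    using pf prog that
    by (intro eval_Comp[where ys = "map (\<lambda>G. G xs) Gs"]) (auto simp: list_all2_conv_all_nth)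
  then show ?thesis
    unfolding recursive_in_def by blast
qed

lemma recursive_in_comp1:
  "recursive_in X 1 F \<Longrightarrow> recursive_in X k f \<Longrightarrow> recursive_in X k (\<lambda>xs. F [f xs])"
  using recursive_in_comp[of X "[f]" F k] by simp

lemma recursive_in_comp2:
  "recursive_in X 2 F \<Longrightarrow> recursive_in X k f \<Longrightarrow> recursive_in X k g
    \<Longrightarrow> recursive_in X k (\<lambda>xs. F [f xs, g xs])"
  using recursive_in_comp[of X "[f, g]" F k] by (simp add: numeral_2_eq_2)

lemma recursive_in_comp3:
  "recursive_in X 3 F \<Longrightarrow> recursive_in X k f \<Longrightarrow> recursive_in X k g \<Longrightarrow> recursive_in X k h
    \<Longrightarrow> recursive_in X k (\<lambda>xs. F [f xs, g xs, h xs])"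
  using recursive_in_comp[of X "[f, g, h]" F k] by (simp add: numeral_3_eq_3)

lemma recursive_in_comp4:
  "recursive_in X 4 F \<Longrightarrow> recursive_in X k f \<Longrightarrow> recursive_in X k g \<Longrightarrow> recursive_in X k h
    \<Longrightarrow> recursive_in X k u \<Longrightarrow> recursive_in X k (\<lambda>xs. F [f xs, g xs, h xs, u xs])"
  using recursive_in_comp[of X "[f, g, h, u]" F k] by (simp add: eval_nat_numeral)

lemma recursive_in_tl: "recursive_in X k f \<Longrightarrow> recursive_in X (Suc k) (\<lambda>xs. f (tl xs))"
proof -
  assume "recursive_in X k f"
  then have "recursive_in X (Suc k) (\<lambda>xs. f (map (\<lambda>G. G xs) (map (\<lambda>i xs. xs ! Suc i) [0..<k])))"
    by (intro recursive_in_comp) (auto intro: recursive_in_nth)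
  then show ?thesis
    by (rule recursive_in_cong) (auto simp: comp_def nth_tl intro!: arg_cong[where f = f] nth_equalityI)
qed

fun prim_rec :: "(nat list \<Rightarrow> nat) \<Rightarrow> (nat list \<Rightarrow> nat) \<Rightarrow> nat \<Rightarrow> nat list \<Rightarrow> nat" where
  "prim_rec f g 0 xs = f xs"
| "prim_rec f g (Suc n) xs = g (n # prim_rec f g n xs # xs)"

lemma recursive_in_prim_rec:
  assumes "recursive_in X k f" "recursive_in X (Suc (Suc k)) g"
  shows "recursive_in X (Suc k) (\<lambda>xs. prim_rec f g (hd xs) (tl xs))"
proof -
  obtain pf pg where pf: "\<forall>xs. length xs = k \<longrightarrow> eval X pf xs (f xs)"
    and pg: "\<forall>xs. length xs = Suc (Suc k) \<longrightarrow> eval X pg xs (g xs)"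
    using assms unfolding recursive_in_def by auto
  have "eval X (Prec pf pg) (n # xs) (prim_rec f g n xs)" if "length xs = k" for n xs
    using that by (induction n) (use pf pg in \<open>auto intro: eval_Prec0 eval_PrecS\<close>)
  then show ?thesis
    unfolding recursive_in_def by (auto simp: length_Suc_conv intro!: exI[of _ "Prec pf pg"])
qed

inductive_cases eval_MinimE: "eval X (Minim f) xs y"

lemma eval_Minim_iff_Least:
  assumes "\<forall>ys. length ys = Suc k \<longrightarrow> eval X p ys (f ys)" and "length xs = k"
  shows "eval X (Minim p) xs y \<longleftrightarrow> (\<exists>m. f (m # xs) = 0) \<and> y = (LEAST m. f (m # xs) = 0)"
proof -
  have f: "eval X p (m # xs) (f (m # xs))" for m
    using assms by simp
  show ?thesis
  proof
    assume "eval X (Minim p) xs y"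
    then have zero: "eval X p (y # xs) 0" and below: "\<forall>m<y. \<exists>v>0. eval X p (m # xs) v"
      by (auto elim: eval_MinimE)
    have "f (y # xs) = 0"
      using eval_deterministic[OF zero f] by simp
    moreover have "y \<le> m" if "f (m # xs) = 0" for m
    proof (rule ccontr)
      assume "\<not> y \<le> m"
      then obtain v where "v > 0" "eval X p (m # xs) v"
        using below by (auto simp: not_le)
      with eval_deterministic[OF this(2) f] that show False
        by simp
    qed
    ultimately show "(\<exists>m. f (m # xs) = 0) \<and> y = (LEAST m. f (m # xs) = 0)"
      by (intro conjI exI[of _ y] Least_equality[symmetric]) auto
  next
    assume "(\<exists>m. f (m # xs) = 0) \<and> y = (LEAST m. f (m # xs) = 0)"
    then obtain ex: "\<exists>m. f (m # xs) = 0" and y: "y = (LEAST m. f (m # xs) = 0)"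
      by blast
    have zero: "f (y # xs) = 0"
      unfolding y by (rule LeastI_ex[OF ex])
    have below: "f (m # xs) \<noteq> 0" if "m < y" for m
      using that unfolding y by (rule not_less_Least)
    show "eval X (Minim p) xs y"
    proof (rule eval_Minim)
      show "eval X p (y # xs) 0"
        using f[of y] zero by simp
      show "\<forall>m<y. \<exists>v>0. eval X p (m # xs) v"
        using f below by blast
    qed
  qed
qed

section \<open>Arithmetic and bounded logic\<close>

lemma recursive_in_Suc_comp: "recursive_in X k f \<Longrightarrow> recursive_in X k (\<lambda>xs. Suc (f xs))"
  using recursive_in_comp1[OF recursive_in_Suc] by simp

lemma recursive_in_binary_prim_rec:
  assumes "recursive_in X 1 f" "recursive_in X 3 g"
    and "\<And>n b. prim_rec f g n [b] = h n b"
  shows "recursive_in X 2 (\<lambda>xs. h (xs!0) (xs!1))"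
proof -
  have "recursive_in X 2 (\<lambda>xs. prim_rec f g (hd xs) (tl xs))"
    using recursive_in_prim_rec[of X 1 f g] assms(1,2) by (simp add: numeral_2_eq_2 numeral_3_eq_3)
  then show ?thesis
    by (rule recursive_in_cong) (auto simp: length_Suc_conv numeral_2_eq_2 assms(3))
qed

lemma recursive_in_add:
  assumes "recursive_in X k f" "recursive_in X k g"
  shows "recursive_in X k (\<lambda>xs. f xs + g xs)"
proof -
  have add: "prim_rec (\<lambda>ys. ys!0) (\<lambda>ys. Suc (ys!1)) n [b] = n + b" for n b
    by (induction n) auto
  have "recursive_in X 2 (\<lambda>xs. xs!0 + xs!1)"
    by (rule recursive_in_binary_prim_rec[OF _ _ add]) (intro recursive_in_nth recursive_in_Suc_comp; simp)+
  from recursive_in_comp2[OF this assms] show ?thesis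
    by simp
qed

lemma recursive_in_diff:
  assumes "recursive_in X k f" "recursive_in X k g"
  shows "recursive_in X k (\<lambda>xs. f xs - g xs)"
proof -
  have pred: "prim_rec (\<lambda>_. 0) (\<lambda>ys. ys!0) n [] = n - 1" for n
    by (induction n) auto
  have "recursive_in X 1 (\<lambda>xs. prim_rec (\<lambda>_. 0) (\<lambda>ys. ys!0) (hd xs) (tl xs))"
    using recursive_in_prim_rec[of X 0] recursive_in_const recursive_in_nth by simp
  then have "recursive_in X 1 (\<lambda>xs. xs!0 - 1)"
    by (rule recursive_in_cong) (auto simp: length_Suc_conv pred)
  from recursive_in_comp1[OF this recursive_in_nth[of 1 3]]
  have "recursive_in X 3 (\<lambda>ys. ys!1 - 1)"
    by simp
  moreover have diff: "prim_rec (\<lambda>ys. ys!0) (\<lambda>ys. ys!1 - 1) n [b] = b - n" for n b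
    by (induction n) auto
  ultimately have "recursive_in X 2 (\<lambda>xs. xs!1 - xs!0)"
    by (intro recursive_in_binary_prim_rec[OF _ _ diff] recursive_in_nth) simp_all
  from recursive_in_comp2[OF this assms(2,1)] show ?thesis
    by simp
qed

lemma recursive_in_mult:
  assumes "recursive_in X k f" "recursive_in X k g"
  shows "recursive_in X k (\<lambda>xs. f xs * g xs)"
proof -
  have mult: "prim_rec (\<lambda>_. 0) (\<lambda>ys. ys!1 + ys!2) n [b] = n * b" for n b
    by (induction n) auto
  have "recursive_in X 2 (\<lambda>xs. xs!0 * xs!1)"
    by (rule recursive_in_binary_prim_rec[OF _ _ mult]) (intro recursive_in_add recursive_in_nth recursive_in_const; simp)+
  from recursive_in_comp2[OF this assms] show ?thesis
    by simp
qed

lemma recursive_in_of_bool_less: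
  assumes "recursive_in X k f" "recursive_in X k g"
  shows "recursive_in X k (\<lambda>xs. of_bool (f xs < g xs))"
proof -
  have "recursive_in X k (\<lambda>xs. 1 - (1 - (g xs - f xs)))"
    by (intro recursive_in_diff recursive_in_const assms)
  then show ?thesis
    by (rule recursive_in_cong) auto
qed

lemma recursive_in_of_bool_not:
  "recursive_in X k (\<lambda>xs. of_bool (P xs)) \<Longrightarrow> recursive_in X k (\<lambda>xs. of_bool (\<not> P xs))"
  by (drule recursive_in_diff[OF recursive_in_const[of X k 1]]) (erule recursive_in_cong; simp)

lemma recursive_in_of_bool_conj:
  "recursive_in X k (\<lambda>xs. of_bool (P xs)) \<Longrightarrow> recursive_in X k (\<lambda>xs. of_bool (Q xs))
    \<Longrightarrow> recursive_in X k (\<lambda>xs. of_bool (P xs \<and> Q xs))"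
  by (drule (1) recursive_in_mult) (erule recursive_in_cong; simp)

lemma recursive_in_of_bool_disj:
  "recursive_in X k (\<lambda>xs. of_bool (P xs)) \<Longrightarrow> recursive_in X k (\<lambda>xs. of_bool (Q xs))
    \<Longrightarrow> recursive_in X k (\<lambda>xs. of_bool (P xs \<or> Q xs))"
  using recursive_in_of_bool_not recursive_in_of_bool_conj[of X k "\<lambda>xs. \<not> P xs" "\<lambda>xs. \<not> Q xs"]
  by fastforce

lemma recursive_in_of_bool_eq:
  assumes "recursive_in X k f" "recursive_in X k g"
  shows "recursive_in X k (\<lambda>xs. of_bool (f xs = g xs))"
proof -
  have "recursive_in X k (\<lambda>xs. of_bool (\<not> (f xs < g xs \<or> g xs < f xs)))"
    by (intro recursive_in_of_bool_not recursive_in_of_bool_disj recursive_in_of_bool_less assms)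
  then show ?thesis
    by (rule recursive_in_cong) (simp add: nat_neq_iff)
qed

lemma recursive_in_Cons_comp:
  assumes "recursive_in X (Suc k) F" "recursive_in X k f"
  shows "recursive_in X k (\<lambda>xs. F (f xs # xs))"
proof -
  have "recursive_in X k (\<lambda>xs. F (map (\<lambda>G. G xs) (f # map (\<lambda>i xs. xs ! i) [0..<k])))"
    using assms by (intro recursive_in_comp) (auto intro: recursive_in_nth)
  then show ?thesis
    by (rule recursive_in_cong) (simp add: comp_def, metis map_nth)
qed

lemma recursive_in_drop_second:
  assumes "recursive_in X (Suc k) h"
  shows "recursive_in X (Suc (Suc k)) (\<lambda>ys. h (hd ys # tl (tl ys)))"
proof -
  have "recursive_in X (Suc (Suc k)) (\<lambda>ys. h (map (\<lambda>G. G ys) (hd # map (\<lambda>i ys. ys ! Suc (Suc i)) [0..<k])))"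
    using assms by (intro recursive_in_comp) (auto intro: recursive_in_nth recursive_in_hd)
  then show ?thesis
    by (rule recursive_in_cong) (auto simp: length_Suc_conv comp_def intro!: arg_cong[where f = h] nth_equalityI)
qed

lemma recursive_in_of_bool_All_less:
  assumes "recursive_in X (Suc k) (\<lambda>ys. of_bool (P (hd ys) (tl ys)))" "recursive_in X k N"
  shows "recursive_in X k (\<lambda>xs. of_bool (\<forall>j<N xs. P j xs))"
proof -
  let ?g = "\<lambda>ys. ys!1 * of_bool (P (hd ys) (tl (tl ys)))"
  have "prim_rec (\<lambda>_. 1) ?g n xs = of_bool (\<forall>j<n. P j xs)" for n xs
    by (induction n) (auto simp: less_Suc_eq)
  moreover have "recursive_in X (Suc k) (\<lambda>xs. prim_rec (\<lambda>_. 1) ?g (hd xs) (tl xs))"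
    using recursive_in_drop_second[OF assms(1)]
    by (intro recursive_in_prim_rec recursive_in_mult recursive_in_nth recursive_in_const) auto
  ultimately show ?thesis
    using recursive_in_Cons_comp[OF _ assms(2)] by fastforce
qed

lemma recursive_in_of_bool_Ex_less:
  assumes "recursive_in X (Suc k) (\<lambda>ys. of_bool (P (hd ys) (tl ys)))" "recursive_in X k N"
  shows "recursive_in X k (\<lambda>xs. of_bool (\<exists>j<N xs. P j xs))"
proof -
  have "recursive_in X k (\<lambda>xs. of_bool (\<not> (\<forall>j<N xs. \<not> P j xs)))"
    by (intro recursive_in_of_bool_not recursive_in_of_bool_All_less assms)
  then show ?thesis
    by simp
qed

lemma recursive_in_Least:
  assumes "recursive_in X (Suc k) (\<lambda>ys. of_bool (P (hd ys) (tl ys)))"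
    and ex: "\<And>xs. length xs = k \<Longrightarrow> \<exists>m. P m xs"
  shows "recursive_in X k (\<lambda>xs. LEAST m. P m xs)"
proof -
  obtain p where p: "\<forall>ys. length ys = Suc k \<longrightarrow> eval X p ys (of_bool (\<not> P (hd ys) (tl ys)))"
    using recursive_in_of_bool_not[OF assms(1)] unfolding recursive_in_def by blast
  have "eval X (Minim p) xs (LEAST m. P m xs)" if "length xs = k" for xs
    using eval_Minim_iff_Least[OF p that] ex[OF that] by simp
  then show ?thesis
    unfolding recursive_in_def by blast
qed

lemma ex_recf_halts_iff_Ex:
  assumes "recursive_in X (Suc k) (\<lambda>ys. of_bool (P ys))"
  shows "\<exists>U. \<forall>xs. length xs = k \<longrightarrow> (\<exists>y. eval X U xs y) \<longleftrightarrow> (\<exists>m. P (m # xs))"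
proof -
  obtain p where p: "\<forall>ys. length ys = Suc k \<longrightarrow> eval X p ys (of_bool (\<not> P ys))"
    using recursive_in_of_bool_not[OF assms] unfolding recursive_in_def by blast
  have "(\<exists>y. eval X (Minim p) xs y) \<longleftrightarrow> (\<exists>m. P (m # xs))" if "length xs = k" for xs
    using eval_Minim_iff_Least[OF p that] by simp
  then show ?thesis
    by blast
qed

section \<open>Decoding pairs and lists\<close>

lemma recursive_in_triangle:
  assumes "recursive_in X k f"
  shows "recursive_in X k (\<lambda>xs. triangle (f xs))"
proof -
  have tri: "prim_rec (\<lambda>_. 0) (\<lambda>ys. ys!1 + Suc (ys!0)) n [] = triangle n" for n
    by (induction n) auto
  have "recursive_in X (Suc 0) (\<lambda>xs. prim_rec (\<lambda>_. 0) (\<lambda>ys. ys!1 + Suc (ys!0)) (hd xs) (tl xs))"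
    by (intro recursive_in_prim_rec recursive_in_add recursive_in_Suc_comp recursive_in_nth recursive_in_const) auto
  then have "recursive_in X (Suc 0) (\<lambda>xs. triangle (xs!0))"
    by (rule recursive_in_cong) (auto simp: length_Suc_conv tri[simplified])
  from recursive_in_comp1[unfolded One_nat_def, OF this assms] show ?thesis
    by simp
qed

lemma recursive_in_prod_encode:
  "recursive_in X k f \<Longrightarrow> recursive_in X k g \<Longrightarrow> recursive_in X k (\<lambda>xs. prod_encode (f xs, g xs))"
  unfolding prod_encode_def by (simp, intro recursive_in_add recursive_in_triangle)

lemma prod_decode_less_Suc: "fst (prod_decode z) < Suc z" "snd (prod_decode z) < Suc z"
  using le_prod_encode_1[where a = "fst (prod_decode z)" and b = "snd (prod_decode z)"]
    le_prod_encode_2[where a = "fst (prod_decode z)" and b = "snd (prod_decode z)"]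
  by (simp_all add: le_imp_less_Suc)

lemma fst_prod_decode_eq_Least: "fst (prod_decode z) = (LEAST a. \<exists>b<Suc z. prod_encode (a, b) = z)"
proof (rule Least_equality[symmetric])
  show "\<exists>b<Suc z. prod_encode (fst (prod_decode z), b) = z"
    using prod_decode_less_Suc(2) by (intro exI[of _ "snd (prod_decode z)"]) simp
  show "\<exists>b<Suc z. prod_encode (a, b) = z \<Longrightarrow> fst (prod_decode z) \<le> a" for a
    by auto
qed

lemma snd_prod_decode_eq_Least: "snd (prod_decode z) = (LEAST b. \<exists>a<Suc z. prod_encode (a, b) = z)"
proof (rule Least_equality[symmetric])
  show "\<exists>a<Suc z. prod_encode (a, snd (prod_decode z)) = z"
    using prod_decode_less_Suc(1) by (intro exI[of _ "fst (prod_decode z)"]) simp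
  show "\<exists>a<Suc z. prod_encode (a, b) = z \<Longrightarrow> snd (prod_decode z) \<le> b" for b
    by auto
qed

lemma recursive_in_fst_prod_decode:
  assumes "recursive_in X k f"
  shows "recursive_in X k (\<lambda>xs. fst (prod_decode (f xs)))"
proof -
  have "recursive_in X 1 (\<lambda>xs. LEAST a. \<exists>b<Suc (hd xs). prod_encode (a, b) = hd xs)"
  proof (rule recursive_in_Least)
    show "\<exists>a b. b < Suc (hd xs) \<and> prod_encode (a, b) = hd xs" for xs :: "nat list"
      by (intro exI[of _ "fst (prod_decode (hd xs))"] exI[of _ "snd (prod_decode (hd xs))"])
        (simp add: prod_decode_less_Suc(2))
  qed (intro recursive_in_of_bool_Ex_less recursive_in_of_bool_eq recursive_in_prod_encode
      recursive_in_Suc_comp recursive_in_hd recursive_in_tl; simp)+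
  from recursive_in_comp1[OF this assms] show ?thesis
    by (simp add: fst_prod_decode_eq_Least)
qed

lemma recursive_in_snd_prod_decode:
  assumes "recursive_in X k f"
  shows "recursive_in X k (\<lambda>xs. snd (prod_decode (f xs)))"
proof -
  have "recursive_in X 1 (\<lambda>xs. LEAST b. \<exists>a<Suc (hd xs). prod_encode (a, b) = hd xs)"
  proof (rule recursive_in_Least)
    show "\<exists>b a. a < Suc (hd xs) \<and> prod_encode (a, b) = hd xs" for xs :: "nat list"
      by (intro exI[of _ "snd (prod_decode (hd xs))"] exI[of _ "fst (prod_decode (hd xs))"])
        (simp add: prod_decode_less_Suc(1))
  qed (intro recursive_in_of_bool_Ex_less recursive_in_of_bool_eq recursive_in_prod_encode
      recursive_in_Suc_comp recursive_in_hd recursive_in_tl; simp)+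
  from recursive_in_comp1[OF this assms] show ?thesis
    by (simp add: snd_prod_decode_eq_Least)
qed

lemma prod_decode_0: "prod_decode 0 = (0, 0)"
  using prod_encode_inverse[of "(0, 0)"] by (simp add: prod_encode_def)

lemma list_encode_tl: "list_encode (tl xs) = snd (prod_decode (list_encode xs - 1))"
  by (cases xs) (simp_all add: prod_decode_0)

lemma recursive_in_list_encode_drop:
  assumes "recursive_in X k f" "recursive_in X k g"
  shows "recursive_in X k (\<lambda>xs. list_encode (drop (f xs) (list_decode (g xs))))"
proof -
  let ?step = "\<lambda>ys. snd (prod_decode (ys!1 - 1))"
  have drop: "prim_rec (\<lambda>ys. ys!0) ?step n [z] = list_encode (drop n (list_decode z))" for n z
    by (induction n) (simp_all add: drop_Suc tl_drop[symmetric] list_encode_tl)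
  have "recursive_in X 2 (\<lambda>xs. list_encode (drop (xs!0) (list_decode (xs!1))))"
    by (rule recursive_in_binary_prim_rec[OF _ _ drop])
      (intro recursive_in_snd_prod_decode recursive_in_diff recursive_in_nth recursive_in_const; simp)+
  from recursive_in_comp2[OF this assms] show ?thesis
    by simp
qed

lemma list_encode_eq_0: "list_encode xs = 0 \<longleftrightarrow> xs = []"
  by (cases xs) simp_all

lemma recursive_in_length_list_decode:
  assumes "recursive_in X k f"
  shows "recursive_in X k (\<lambda>xs. length (list_decode (f xs)))"
proof -
  have length_eq: "(LEAST n. list_encode (drop n (list_decode z)) = 0) = length (list_decode z)" for z
    by (rule Least_equality) (simp_all add: list_encode_eq_0)
  have "\<exists>n. list_encode (drop n (list_decode z)) = 0" for z
    by (intro exI[of _ "length (list_decode z)"]) simp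
  then have "recursive_in X k (\<lambda>xs. LEAST n. list_encode (drop n (list_decode (f xs))) = 0)"
    by (intro recursive_in_Least recursive_in_of_bool_eq recursive_in_list_encode_drop
        recursive_in_hd recursive_in_tl recursive_in_const assms) simp
  then show ?thesis
    by (simp only: length_eq)
qed

lemma nth_default_list_decode:
  "nth_default 0 (list_decode z) j = fst (prod_decode (list_encode (drop j (list_decode z)) - 1))"
proof (cases "j < length (list_decode z)")
  case True
  then show ?thesis
    by (simp add: nth_default_def Cons_nth_drop_Suc[OF True, symmetric])
next
  case False
  then show ?thesis
    by (simp add: nth_default_def prod_decode_0)
qed

lemma recursive_in_nth_default_list_decode:
  "recursive_in X k f \<Longrightarrow> recursive_in X k g
    \<Longrightarrow> recursive_in X k (\<lambda>xs. nth_default 0 (list_decode (f xs)) (g xs))"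
  unfolding nth_default_list_decode
  by (intro recursive_in_fst_prod_decode recursive_in_diff recursive_in_list_encode_drop recursive_in_const)

section \<open>Computing program indices\<close>

lemma recursive_in_enc_const_recf:
  assumes "recursive_in X k f"
  shows "recursive_in X k (\<lambda>xs. enc (const_recf (f xs)))"
proof -
  let ?step = "\<lambda>ys. prod_encode (3, list_encode [enc SucF, ys!1])"
  have enc: "prim_rec (\<lambda>_. enc Zero) ?step n [] = enc (const_recf n)" for n
    by (induction n) simp_all
  have "recursive_in X (Suc 0) (\<lambda>xs. prim_rec (\<lambda>_. enc Zero) ?step (hd xs) (tl xs))"
    by (intro recursive_in_prim_rec recursive_in_const)
      (simp, intro recursive_in_prod_encode recursive_in_Suc_comp recursive_in_const recursive_in_nth; simp)
  then have "recursive_in X (Suc 0) (\<lambda>xs. enc (const_recf (xs!0)))"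
    by (rule recursive_in_cong) (auto simp: length_Suc_conv enc[simplified])
  from recursive_in_comp1[unfolded One_nat_def, OF this assms] show ?thesis
    by simp
qed

inductive_cases eval_CompE: "eval X (Comp f gs) xs y"

definition smn_index :: "recf \<Rightarrow> nat \<Rightarrow> nat" where
  "smn_index U c = enc (Comp U [Proj 0, const_recf c])"

lemma W_smn_index: "W (smn_index U c) X = {x. \<exists>y. eval X U [x, c] y}"
proof -
  have "eval X (Comp U [Proj 0, const_recf c]) [x] y \<longleftrightarrow> eval X U [x, c] y" for x y
  proof
    assume "eval X (Comp U [Proj 0, const_recf c]) [x] y"
    then obtain y1 y2 where "eval X (Proj 0) [x] y1" "eval X (const_recf c) [x] y2" "eval X U [y1, y2] y"
      by (auto elim!: eval_CompE simp: list_all2_Cons1)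
    moreover have "y1 = x"
      using eval_deterministic[OF \<open>eval X (Proj 0) [x] y1\<close> eval_Proj[of 0 "[x]"]] by simp
    moreover have "y2 = c"
      using eval_deterministic[OF \<open>eval X (const_recf c) [x] y2\<close> eval_const_recf] .
    ultimately show "eval X U [x, c] y"
      by simp
  next
    assume "eval X U [x, c] y"
    moreover have "list_all2 (\<lambda>g v. eval X g [x] v) [Proj 0, const_recf c] [x, c]"
      using eval_Proj[of 0 "[x]" X] eval_const_recf[of X c "[x]"] by simp
    ultimately show "eval X (Comp U [Proj 0, const_recf c]) [x] y"
      by (blast intro: eval_Comp)
  qed
  then show ?thesis
    unfolding smn_index_def W_enc by blast
qed

lemma recursive_in_smn_index: "recursive_in X k f \<Longrightarrow> recursive_in X k (\<lambda>xs. smn_index U (f xs))"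
  unfolding smn_index_def
  by (simp, intro recursive_in_prod_encode recursive_in_Suc_comp recursive_in_const recursive_in_enc_const_recf)

text \<open>List codes are built by consing, so the list is assembled from its last entry backwards.\<close>

lemma recursive_in_list_encode_map_upt:
  assumes "recursive_in X 2 f" "recursive_in X 1 N"
  shows "recursive_in X 1 (\<lambda>xs. list_encode (map (\<lambda>i. f [i, xs!0]) [0..<N xs]))"
proof -
  let ?step = "\<lambda>ys. Suc (prod_encode (f [ys!2 - Suc (ys!0), ys!3], ys!1))"
  have build: "prim_rec (\<lambda>_. 0) ?step r [n, z] = list_encode (map (\<lambda>i. f [i, z]) [n - r..<n])"
    if "r \<le> n" for r n z
    using that by (induction r) (simp_all add: Suc_diff_Suc upt_conv_Cons)
  have "recursive_in X 4 ?step"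
    by (intro recursive_in_Suc_comp recursive_in_prod_encode recursive_in_comp2[OF assms(1)]
        recursive_in_diff recursive_in_nth) simp_all
  then have "recursive_in X 3 (\<lambda>xs. prim_rec (\<lambda>_. 0) ?step (hd xs) (tl xs))"
    using recursive_in_prim_rec[of X 2 "\<lambda>_. 0" ?step] recursive_in_const
    by (simp add: numeral_eq_Suc)
  from recursive_in_comp3[OF this assms(2) assms(2) recursive_in_nth[of 0 1]]
  have "recursive_in X 1 (\<lambda>xs. prim_rec (\<lambda>_. 0) ?step (N xs) [N xs, xs!0])"
    by simp
  then show ?thesis
    by (rule recursive_in_cong) (simp only: build[OF order_refl] diff_self_eq_0)
qed

section \<open>Reachability in the approximation graphs\<close>

lemma finite_bound_exists:
  fixes P :: "'a \<Rightarrow> nat \<Rightarrow> bool"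
  assumes "finite S" "\<forall>u\<in>S. \<exists>n. P u n"
  shows "\<exists>N. \<forall>u\<in>S. \<exists>n\<le>N. P u n"
proof -
  from bchoice[OF assms(2)] obtain n where n: "\<forall>u\<in>S. P u (n u)" ..
  have "\<forall>u\<in>S. n u \<le> Max (n ` S) \<and> P u (n u)"
    using assms(1) n by (auto intro!: Max_ge)
  then show ?thesis
    by blast
qed

definition approx_edge :: "(nat \<Rightarrow> nat \<Rightarrow> nat \<Rightarrow> nat \<Rightarrow> bool) \<Rightarrow> nat list \<Rightarrow> nat \<Rightarrow> nat \<Rightarrow> nat \<Rightarrow> bool" where
  "approx_edge Q xs t k l \<longleftrightarrow> k < length xs \<and> l < length xs \<and> (\<forall>a\<le>t. \<exists>b. Q (xs!k) (xs!l) a b)"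

lemma approx_edge_eventually_sound:
  assumes RQ: "\<And>u v. R u v \<longleftrightarrow> (\<forall>a. \<exists>b. Q u v a b)"
  shows "\<exists>t. \<forall>k l. approx_edge Q xs t k l \<longrightarrow> R (xs!k) (xs!l)"
proof -
  let ?S = "{(k, l). k < length xs \<and> l < length xs \<and> \<not> R (xs!k) (xs!l)}"
  have fin: "finite ?S"
    by (rule finite_subset[of _ "{..<length xs} \<times> {..<length xs}"]) auto
  have refuted: "\<forall>u\<in>?S. \<exists>a. \<not> (\<exists>b. Q (xs!fst u) (xs!snd u) a b)"
    by (auto simp: RQ)
  from finite_bound_exists[OF fin refuted]
  obtain t where t: "\<forall>u\<in>?S. \<exists>a\<le>t. \<not> (\<exists>b. Q (xs!fst u) (xs!snd u) a b)" ..
  have "R (xs!k) (xs!l)" if "approx_edge Q xs t k l" for k l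
  proof (rule ccontr)
    assume "\<not> R (xs!k) (xs!l)"
    with that have "(k, l) \<in> ?S"
      unfolding approx_edge_def by simp
    with t obtain a where "a \<le> t" "\<not> (\<exists>b. Q (xs!k) (xs!l) a b)"
      by fastforce
    with that show False
      unfolding approx_edge_def by blast
  qed
  then show ?thesis
    by blast
qed

lemma rtranclp_approx_edge_imp_R:
  assumes "equivp R" "\<forall>k l. approx_edge Q xs t k l \<longrightarrow> R (xs!k) (xs!l)"
    and "(approx_edge Q xs t)\<^sup>*\<^sup>* m i"
  shows "R (xs!m) (xs!i)"
  using assms(3)
proof (induction rule: rtranclp_induct)
  case base
  show ?case
    using assms(1) by (simp add: equivp_reflp)
next
  case (step k l)
  then have "R (xs!k) (xs!l)"
    using assms(2) by blast
  with step.IH show ?case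
    by (rule equivp_transp[OF assms(1)])
qed

lemma approx_reachability_eq_iff:
  assumes "equivp R" and RQ: "\<And>u v. R u v \<longleftrightarrow> (\<forall>a. \<exists>b. Q u v a b)"
    and "i < length xs" "j < length xs"
  shows "(\<forall>m t. (approx_edge Q xs t)\<^sup>*\<^sup>* m i \<longleftrightarrow> (approx_edge Q xs t)\<^sup>*\<^sup>* m j) \<longleftrightarrow> R (xs!i) (xs!j)"
proof
  assume reach: "\<forall>m t. (approx_edge Q xs t)\<^sup>*\<^sup>* m i \<longleftrightarrow> (approx_edge Q xs t)\<^sup>*\<^sup>* m j"
  obtain t where sound: "\<forall>k l. approx_edge Q xs t k l \<longrightarrow> R (xs!k) (xs!l)"
    using approx_edge_eventually_sound[where R = R and Q = Q, OF RQ] by blast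
  have "(approx_edge Q xs t)\<^sup>*\<^sup>* i j"
    using reach[rule_format, of t i] by simp
  then show "R (xs!i) (xs!j)"
    by (rule rtranclp_approx_edge_imp_R[OF assms(1) sound])
next
  assume "R (xs!i) (xs!j)"
  then have "R (xs!j) (xs!i)"
    using assms(1) by (meson equivp_symp)
  with \<open>R (xs!i) (xs!j)\<close> have ij: "approx_edge Q xs t i j" and ji: "approx_edge Q xs t j i" for t
    using RQ[of "xs!i" "xs!j"] RQ[of "xs!j" "xs!i"] assms(3,4) unfolding approx_edge_def by simp_all
  show "\<forall>m t. (approx_edge Q xs t)\<^sup>*\<^sup>* m i \<longleftrightarrow> (approx_edge Q xs t)\<^sup>*\<^sup>* m j"
  proof (intro allI iffI)
    show "(approx_edge Q xs t)\<^sup>*\<^sup>* m j" if "(approx_edge Q xs t)\<^sup>*\<^sup>* m i" for m t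
      using that ij by (rule rtranclp.rtrancl_into_rtrancl)
    show "(approx_edge Q xs t)\<^sup>*\<^sup>* m i" if "(approx_edge Q xs t)\<^sup>*\<^sup>* m j" for m t
      using that ji by (rule rtranclp.rtrancl_into_rtrancl)
  qed
qed

definition bounded_path :: "(nat \<Rightarrow> nat \<Rightarrow> nat \<Rightarrow> nat \<Rightarrow> bool) \<Rightarrow> nat list \<Rightarrow> nat \<Rightarrow> nat \<Rightarrow> nat list \<Rightarrow> bool" where
  "bounded_path Q xs t B p \<longleftrightarrow>
     (\<forall>k\<in>set p. k < length xs) \<and> successively (\<lambda>k l. \<forall>a\<le>t. \<exists>b\<le>B. Q (xs!k) (xs!l) a b) p"

lemma rtranclp_approx_edge_imp_bounded_path:
  assumes "(approx_edge Q xs t)\<^sup>*\<^sup>* m i" "i < length xs"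
  shows "\<exists>p B. p \<noteq> [] \<and> hd p = m \<and> last p = i \<and> bounded_path Q xs t B p"
  using assms
proof (induction rule: rtranclp_induct)
  case base
  then show ?case
    unfolding bounded_path_def by (intro exI[of _ "[m]"]) simp
next
  case (step k l)
  then have k: "k < length xs" and edge: "\<forall>a\<in>{..t}. \<exists>b. Q (xs!k) (xs!l) a b"
    unfolding approx_edge_def by auto
  from step.IH[OF k] obtain p B where p: "p \<noteq> []" "hd p = m" "last p = k" "bounded_path Q xs t B p"
    by blast
  from finite_bound_exists[OF finite_atMost edge]
  obtain B' where B': "\<forall>a\<in>{..t}. \<exists>b\<le>B'. Q (xs!k) (xs!l) a b" ..
  have "bounded_path Q xs t (max B B') (p @ [l])"
  proof -
    have "successively (\<lambda>k l. \<forall>a\<le>t. \<exists>b\<le>max B B'. Q (xs!k) (xs!l) a b) p"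
      using p(4) unfolding bounded_path_def
      by (elim conjE successively_mono) (meson max.coboundedI1 order_trans)
    moreover have "\<forall>a\<le>t. \<exists>b\<le>max B B'. Q (xs!k) (xs!l) a b"
      using B' by (meson atMost_iff max.coboundedI2 order_trans)
    ultimately show ?thesis
      using p step.prems unfolding bounded_path_def by (simp add: successively_append_iff)
  qed
  with p(1,2) show ?case
    by (intro exI[of _ "p @ [l]"] exI[of _ "max B B'"]) simp
qed

lemma bounded_path_imp_rtranclp_approx_edge:
  "bounded_path Q xs t B p \<Longrightarrow> p \<noteq> [] \<Longrightarrow> (approx_edge Q xs t)\<^sup>*\<^sup>* (hd p) (last p)"
proof (induction p rule: induct_list012)
  case (3 k l p)
  then have "approx_edge Q xs t k l"
    unfolding bounded_path_def approx_edge_def by auto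
  moreover have "(approx_edge Q xs t)\<^sup>*\<^sup>* l (last (l # p))"
    using "3.IH"(2) "3.prems"(1) unfolding bounded_path_def by simp
  ultimately show ?case
    by (simp add: converse_rtranclp_into_rtranclp)
qed simp_all

lemma rtranclp_approx_edge_iff_bounded_path:
  assumes "i < length xs"
  shows "(approx_edge Q xs t)\<^sup>*\<^sup>* m i \<longleftrightarrow> (\<exists>p B. p \<noteq> [] \<and> hd p = m \<and> last p = i \<and> bounded_path Q xs t B p)"
proof
  assume "(approx_edge Q xs t)\<^sup>*\<^sup>* m i"
  then show "\<exists>p B. p \<noteq> [] \<and> hd p = m \<and> last p = i \<and> bounded_path Q xs t B p"
    using assms by (rule rtranclp_approx_edge_imp_bounded_path)
next
  assume "\<exists>p B. p \<noteq> [] \<and> hd p = m \<and> last p = i \<and> bounded_path Q xs t B p"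
  then obtain p B where "p \<noteq> []" "hd p = m" "last p = i" "bounded_path Q xs t B p"
    by blast
  then show "(approx_edge Q xs t)\<^sup>*\<^sup>* m i"
    using bounded_path_imp_rtranclp_approx_edge by blast
qed

text \<open>\<open>w\<close> codes a path together with a bound on the witnesses \<open>b\<close>, \<open>x\<close> codes \<open>(m, t)\<close> and
  \<open>c\<close> codes \<open>(xs, i)\<close>.\<close>

definition path_witness :: "(nat \<Rightarrow> nat \<Rightarrow> nat \<Rightarrow> nat \<Rightarrow> bool) \<Rightarrow> nat \<Rightarrow> nat \<Rightarrow> nat \<Rightarrow> bool" where
  "path_witness Q w x c \<longleftrightarrow>
     (let p = list_decode (fst (prod_decode w)); B = snd (prod_decode w);
          m = fst (prod_decode x); t = snd (prod_decode x);
          xs = list_decode (fst (prod_decode c)); i = snd (prod_decode c)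
      in p \<noteq> [] \<and> hd p = m \<and> last p = i \<and> bounded_path Q xs t B p)"

lemma Ex_path_witness_iff:
  assumes "i < length xs"
  shows "(\<exists>w. path_witness Q w (prod_encode (m, t)) (prod_encode (list_encode xs, i)))
    \<longleftrightarrow> (approx_edge Q xs t)\<^sup>*\<^sup>* m i"
proof -
  have "(\<exists>w. path_witness Q w (prod_encode (m, t)) (prod_encode (list_encode xs, i)))
      \<longleftrightarrow> (\<exists>p B. p \<noteq> [] \<and> hd p = m \<and> last p = i \<and> bounded_path Q xs t B p)"
  proof
    assume "\<exists>w. path_witness Q w (prod_encode (m, t)) (prod_encode (list_encode xs, i))"
    then show "\<exists>p B. p \<noteq> [] \<and> hd p = m \<and> last p = i \<and> bounded_path Q xs t B p"
      unfolding path_witness_def Let_def by auto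
  next
    assume "\<exists>p B. p \<noteq> [] \<and> hd p = m \<and> last p = i \<and> bounded_path Q xs t B p"
    then obtain p B where "p \<noteq> [] \<and> hd p = m \<and> last p = i \<and> bounded_path Q xs t B p"
      by blast
    then have "path_witness Q (prod_encode (list_encode p, B)) (prod_encode (m, t)) (prod_encode (list_encode xs, i))"
      unfolding path_witness_def by simp
    then show "\<exists>w. path_witness Q w (prod_encode (m, t)) (prod_encode (list_encode xs, i))" ..
  qed
  also have "\<dots> \<longleftrightarrow> (approx_edge Q xs t)\<^sup>*\<^sup>* m i"
    using rtranclp_approx_edge_iff_bounded_path[OF assms] by simp
  finally show ?thesis .
qed

lemma successively_iff_nth: "successively P xs \<longleftrightarrow> (\<forall>j<length xs - 1. P (xs!j) (xs!Suc j))"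
  by (induction xs rule: induct_list012) (auto simp: less_Suc_eq_0_disj)

text \<open>With \<open>nth_default\<close> every list access is total, which is the form in which
  \<open>path_witness\<close> is shown to be computable.\<close>

lemma bounded_path_iff_nth_default:
  "p \<noteq> [] \<and> hd p = m \<and> last p = i \<and> bounded_path Q xs t B p \<longleftrightarrow>
     0 < length p \<and> nth_default 0 p 0 = m \<and> nth_default 0 p (length p - 1) = i \<and>
     (\<forall>j<length p. nth_default 0 p j < length xs) \<and>
     (\<forall>j<length p - 1. \<forall>a<Suc t. \<exists>b<Suc B.
        Q (nth_default 0 xs (nth_default 0 p j)) (nth_default 0 xs (nth_default 0 p (Suc j))) a b)"
proof (cases "p = []")
  case False
  then have "\<forall>j<length p - 1. j < length p \<and> Suc j < length p"
    by auto
  with False show ?thesis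
    unfolding bounded_path_def successively_iff_nth all_set_conv_all_nth less_Suc_eq_le
    by (auto simp: hd_conv_nth last_conv_nth nth_default_nth)
qed simp

lemma recursive_in_path_witness:
  assumes Q: "recursive_in X 4 (\<lambda>ys. of_bool (Q (ys!0) (ys!1) (ys!2) (ys!3)))"
  shows "recursive_in X 3 (\<lambda>ys. of_bool (path_witness Q (ys!0) (ys!1) (ys!2)))"
proof -
  have rec_Q: "recursive_in X k (\<lambda>xs. of_bool (Q (f1 xs) (f2 xs) (f3 xs) (f4 xs)))"
    if "recursive_in X k f1" "recursive_in X k f2" "recursive_in X k f3" "recursive_in X k f4"
    for k f1 f2 f3 f4
    using recursive_in_comp4[OF Q that] by simp
  show ?thesis
    unfolding path_witness_def Let_def bounded_path_iff_nth_default
    by (intro recursive_in_of_bool_conj recursive_in_of_bool_eq recursive_in_of_bool_less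
        recursive_in_of_bool_All_less recursive_in_of_bool_Ex_less rec_Q
        recursive_in_nth_default_list_decode recursive_in_length_list_decode
        recursive_in_fst_prod_decode recursive_in_snd_prod_decode recursive_in_diff
        recursive_in_Suc_comp recursive_in_const recursive_in_nth recursive_in_hd recursive_in_tl; simp)
qed

lemma Pi2_relE:
  assumes "Pi2_rel X R"
  obtains Q where "recursive_in X 4 (\<lambda>ys. of_bool (Q (ys!0) (ys!1) (ys!2) (ys!3)))"
    and "\<And>u v. R u v \<longleftrightarrow> (\<forall>a. \<exists>b. Q u v a b)"
proof -
  obtain Q q where q: "\<forall>i j a b. eval X q [i, j, a, b] (if Q i j a b then 1 else 0)"
    and RQ: "\<forall>i j. R i j \<longleftrightarrow> (\<forall>a. \<exists>b. Q i j a b)"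
    using assms unfolding Pi2_rel_def by blast
  have "eval X q ys (of_bool (Q (ys!0) (ys!1) (ys!2) (ys!3)))" if "length ys = 4" for ys
  proof -
    from that obtain i j a b where "ys = [i, j, a, b]"
      by (auto simp: numeral_eq_Suc length_Suc_conv)
    then show ?thesis
      using q by (simp add: of_bool_def)
  qed
  then have "recursive_in X 4 (\<lambda>ys. of_bool (Q (ys!0) (ys!1) (ys!2) (ys!3)))"
    unfolding recursive_in_def by blast
  with RQ show ?thesis
    using that by blast
qed

lemma uniform_indices_approx_reachability:
  assumes "recursive_in X 4 (\<lambda>ys. of_bool (Q (ys!0) (ys!1) (ys!2) (ys!3)))"
  obtains g where "recursive_in {} 1 (\<lambda>ys. list_encode (g (list_decode (ys!0))))"
    and "\<And>xs. length (g xs) = length xs"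
    and "\<And>xs i. i < length xs \<Longrightarrow> W (g xs ! i) X = prod_encode ` {(m, t). (approx_edge Q xs t)\<^sup>*\<^sup>* m i}"
proof -
  from ex_recf_halts_iff_Ex[OF recursive_in_path_witness[OF assms, unfolded numeral_3_eq_3]]
  obtain U where U: "\<forall>xs. length xs = Suc (Suc 0) \<longrightarrow> (\<exists>y. eval X U xs y) \<longleftrightarrow>
      (\<exists>w. path_witness Q ((w # xs)!0) ((w # xs)!1) ((w # xs)!2))"
    by blast
  have W_U: "W (smn_index U c) X = {x. \<exists>w. path_witness Q w x c}" for c
    using U[rule_format, of "[_, c]"] by (auto simp: W_smn_index)
  define g where "g xs = map (\<lambda>i. smn_index U (prod_encode (list_encode xs, i))) [0..<length xs]" for xs
  have "recursive_in {} 2 (\<lambda>ys. smn_index U (prod_encode (ys!1, ys!0)))"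
    by (intro recursive_in_smn_index recursive_in_prod_encode recursive_in_nth) simp_all
  from recursive_in_list_encode_map_upt[OF this recursive_in_length_list_decode[OF recursive_in_nth[of 0 1]]]
  have "recursive_in {} 1 (\<lambda>ys. list_encode (g (list_decode (ys!0))))"
    by (simp add: g_def)
  moreover have "length (g xs) = length xs" for xs
    by (simp add: g_def)
  moreover have "W (g xs ! i) X = prod_encode ` {(m, t). (approx_edge Q xs t)\<^sup>*\<^sup>* m i}"
    if "i < length xs" for xs i
  proof -
    have "W (g xs ! i) X = {x. \<exists>w. path_witness Q w x (prod_encode (list_encode xs, i))}"
      using that by (simp add: g_def W_U)
    also have "\<dots> = prod_encode ` {(m, t). \<exists>w. path_witness Q w (prod_encode (m, t)) (prod_encode (list_encode xs, i))}"
      by (auto simp: image_iff) (metis prod_decode_inverse prod.collapse)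
    also have "\<dots> = prod_encode ` {(m, t). (approx_edge Q xs t)\<^sup>*\<^sup>* m i}"
      using Ex_path_witness_iff[OF that] by simp
    finally show ?thesis .
  qed
  ultimately show ?thesis
    using that by blast
qed

theorem corollary3p5:
  fixes X :: "nat set" and R :: "nat \<Rightarrow> nat \<Rightarrow> bool"
  assumes "equivp R" and "Pi2_rel X R"
  shows "finitary_reducible R (\<lambda>i j. W i X = W j X)"
proof -
  obtain Q where Q: "recursive_in X 4 (\<lambda>ys. of_bool (Q (ys!0) (ys!1) (ys!2) (ys!3)))"
    and RQ: "\<And>u v. R u v \<longleftrightarrow> (\<forall>a. \<exists>b. Q u v a b)"
    using Pi2_relE[OF assms(2)] by blast
  obtain g where rec_g: "recursive_in {} 1 (\<lambda>ys. list_encode (g (list_decode (ys!0))))"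
    and length_g: "\<And>xs. length (g xs) = length xs"
    and W_g: "\<And>xs i. i < length xs \<Longrightarrow> W (g xs ! i) X = prod_encode ` {(m, t). (approx_edge Q xs t)\<^sup>*\<^sup>* m i}"
    using uniform_indices_approx_reachability[OF Q] by blast
  from rec_g obtain p where p: "\<forall>ys. length ys = 1 \<longrightarrow> eval {} p ys (list_encode (g (list_decode (ys!0))))"
    unfolding recursive_in_def ..
  have reduces: "R (xs!i) (xs!j) \<longleftrightarrow> W (g xs ! i) X = W (g xs ! j) X"
    if "i < length xs" "j < length xs" for xs i j
    unfolding W_g[OF that(1)] W_g[OF that(2)] inj_image_eq_iff[OF inj_prod_encode]
    using approx_reachability_eq_iff[OF assms(1) RQ that] by (simp add: set_eq_iff)
  show ?thesis
    unfolding finitary_reducible_def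
  proof (intro exI[of _ g] exI[of _ p] conjI allI impI)
    show "eval {} p [list_encode xs] (list_encode (g xs))" for xs
      using p[rule_format, of "[list_encode xs]"] by simp
    show "length (g xs) = length xs" for xs
      by (rule length_g)
    show "R (xs!i) (xs!j) \<longleftrightarrow> W (g xs ! i) X = W (g xs ! j) X" if "i < j \<and> j < length xs" for xs i j
      using that by (intro reduces) auto
  qed
qed

end
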